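(* Consider the non-contextual auction problem described in the context with $T\ge N\ge 3$. For any (possibly randomized) learning algorithm $\mathcal{A}$, there exist a sequence of bids $\{b_t\}_{t=1}^T\subset[0,1]^N$ and CTRs $\{\rho_i\}_{i=1}^N\subset[0,1]$ such that the expected regret of $\mathcal{A}$ is at least $\Omega(\sqrt{NT})$.
   Context: Notation: $\mathrm{smax}_i v_i$ is the second-largest entry of $v$; $\arg\max$, $\arg\mathrm{smax}$ the indices of the largest and second-largest entries, ties broken by a fixed deterministic rule. Non-contextual problem: a fixed set of $N$ ads with unknown constant CTRs $\rho_i\in[0,1]$. At each round $t\in[T]$ the learner chooses estimated CTRs $\tilde\rho_t\in[0,1]^N$ (based on past observations); bids $b_t\in[0,1]^N$ are given. The winner is $i_t=\arg\max_i b_{t,i}\tilde\rho_{t,i}$, the runner-up $j_t=\arg\mathrm{smax}_i b_{t,i}\tilde\rho_{t,i}$, the payment per click $d_t=b_{t,j_t}\tilde\rho_{t,j_t}/\tilde\rho_{t,i_t}$; the winner's ad is clicked with probability $\rho_{i_t}$. The learner observes $b_t$ and the click indicator $c_t\in\{0,1\}$ and receives $c_td_t$. Regret: $\mathrm{Reg}=\sum_{t=1}^T\mathrm{smax}_i b_{t,i}\rho_i-\sum_{t=1}^T c_td_t$. *)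

theory Defs
  imports "HOL-Probability.Probability"
begin

(* Vectors in [0,1]^N are functions nat => real, only indices i < N matter.
   Rounds are indexed 0..T-1.  b t i is the bid of ad i at round t. *)

(* Deterministic tie-breaking: argmax = smallest index attaining the maximum;
   arg smax = smallest index attaining the maximum over the remaining indices. *)
definition argmax_idx :: "nat \<Rightarrow> (nat \<Rightarrow> real) \<Rightarrow> nat" where
  "argmax_idx N v = (LEAST i. i < N \<and> (\<forall>j<N. v j \<le> v i))"

definition argsmax_idx :: "nat \<Rightarrow> (nat \<Rightarrow> real) \<Rightarrow> nat" where
  "argsmax_idx N v = (LEAST j. j < N \<and> j \<noteq> argmax_idx N v \<and>
      (\<forall>k<N. k \<noteq> argmax_idx N v \<longrightarrow> v k \<le> v j))"

definition smax :: "nat \<Rightarrow> (nat \<Rightarrow> real) \<Rightarrow> real" where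
  "smax N v = v (argsmax_idx N v)"

(* A deterministic learning policy: at round t it receives the bids b_1..b_t
   (bids of later rounds are masked) and the clicks c_1..c_{t-1}
   (later clicks masked), and outputs estimated CTRs. *)
type_synonym policy = "nat \<Rightarrow> (nat \<Rightarrow> nat \<Rightarrow> real) \<Rightarrow> (nat \<Rightarrow> bool) \<Rightarrow> nat \<Rightarrow> real"

definition est :: "policy \<Rightarrow> (nat \<Rightarrow> nat \<Rightarrow> real) \<Rightarrow> bool list \<Rightarrow> nat \<Rightarrow> nat \<Rightarrow> real" where
  "est \<pi> b c t = \<pi> t (\<lambda>s. if s \<le> t then b s else (\<lambda>_. 0)) (\<lambda>s. s < t \<and> s < length c \<and> c ! s)"

definition winner :: "nat \<Rightarrow> policy \<Rightarrow> (nat \<Rightarrow> nat \<Rightarrow> real) \<Rightarrow> bool list \<Rightarrow> nat \<Rightarrow> nat" where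
  "winner N \<pi> b c t = argmax_idx N (\<lambda>i. b t i * est \<pi> b c t i)"

definition runnerup :: "nat \<Rightarrow> policy \<Rightarrow> (nat \<Rightarrow> nat \<Rightarrow> real) \<Rightarrow> bool list \<Rightarrow> nat \<Rightarrow> nat" where
  "runnerup N \<pi> b c t = argsmax_idx N (\<lambda>i. b t i * est \<pi> b c t i)"

definition payment :: "nat \<Rightarrow> policy \<Rightarrow> (nat \<Rightarrow> nat \<Rightarrow> real) \<Rightarrow> bool list \<Rightarrow> nat \<Rightarrow> real" where
  "payment N \<pi> b c t =
     b t (runnerup N \<pi> b c t) * est \<pi> b c t (runnerup N \<pi> b c t) / est \<pi> b c t (winner N \<pi> b c t)"

definition click_prob :: "nat \<Rightarrow> nat \<Rightarrow> policy \<Rightarrow> (nat \<Rightarrow> nat \<Rightarrow> real) \<Rightarrow> (nat \<Rightarrow> real) \<Rightarrow> bool list \<Rightarrow> real" where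
  "click_prob N T \<pi> b \<rho> c =
     (\<Prod>t<T. if c ! t then \<rho> (winner N \<pi> b c t) else 1 - \<rho> (winner N \<pi> b c t))"

definition exp_revenue :: "nat \<Rightarrow> nat \<Rightarrow> policy \<Rightarrow> (nat \<Rightarrow> nat \<Rightarrow> real) \<Rightarrow> (nat \<Rightarrow> real) \<Rightarrow> real" where
  "exp_revenue N T \<pi> b \<rho> =
     (\<Sum>c\<in>{c :: bool list. length c = T}.
        click_prob N T \<pi> b \<rho> c * (\<Sum>t<T. if c ! t then payment N \<pi> b c t else 0))"

definition exp_regret :: "nat \<Rightarrow> nat \<Rightarrow> policy \<Rightarrow> (nat \<Rightarrow> nat \<Rightarrow> real) \<Rightarrow> (nat \<Rightarrow> real) \<Rightarrow> real" where
  "exp_regret N T \<pi> b \<rho> =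
     (\<Sum>t<T. smax N (\<lambda>i. b t i * \<rho> i)) - exp_revenue N T \<pi> b \<rho>"

end

theory Submission
  imports Defs
begin

(* With all bids equal to 1 the benchmark of round t is the second-largest CTR, while the
   seller collects at most the winner's CTR in expectation.  In instance k the two adjacent ads
   k and k + 1 (mod N) have CTR 1/2 + e and all others 1/2, so every round whose winner lies
   outside that pair costs e.  Under uniform CTRs 1/2 each winner belongs to at most two of the N
   pairs, so on average over k the pair wins in at most 2T/N rounds.  Switching from the uniform
   instance to instance k costs a KL divergence of O(e^2) per round won by the pair, which, through
   the Hellinger distance, limits how much more often the pair can win in instance k.  Taking e of
   order sqrt(N/T), the regret averaged over the N instances is of order e T = sqrt(N T), and a
   randomized algorithm, being a mixture of deterministic ones, suffers it on one instance. *)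

section \<open>Probabilities of click paths\<close>

abbreviation paths :: "nat \<Rightarrow> bool list set" where
  "paths n \<equiv> {c. length c = n}"

(* w d is the probability that the outcome following the history d is True. *)
definition path_prob :: "(bool list \<Rightarrow> real) \<Rightarrow> nat \<Rightarrow> bool list \<Rightarrow> real" where
  "path_prob w n c = (\<Prod>t<n. if c ! t then w (take t c) else 1 - w (take t c))"

lemma finite_paths: "finite (paths n)"
  using finite_lists_length_eq[of "UNIV :: bool set" n] by simp

lemma paths_Suc: "paths (Suc n) = (\<lambda>c. c @ [True]) ` paths n \<union> (\<lambda>c. c @ [False]) ` paths n"
proof (intro equalityI subsetI)
  fix c assume "c \<in> paths (Suc n)"
  then have "c = butlast c @ [last c]" "butlast c \<in> paths n"
    by (auto intro: append_butlast_last_id[symmetric])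
  then show "c \<in> (\<lambda>c. c @ [True]) ` paths n \<union> (\<lambda>c. c @ [False]) ` paths n"
    by (cases "last c") auto
qed auto

lemma sum_paths_Suc:
  "(\<Sum>c\<in>paths (Suc n). F c) = (\<Sum>c\<in>paths n. F (c @ [True]) + F (c @ [False]))"
proof -
  have "(\<Sum>c\<in>paths (Suc n). F c)
      = (\<Sum>c\<in>(\<lambda>c. c @ [True]) ` paths n. F c) + (\<Sum>c\<in>(\<lambda>c. c @ [False]) ` paths n. F c)"
    unfolding paths_Suc by (rule sum.union_disjoint) (auto simp: finite_paths)
  also have "\<dots> = (\<Sum>c\<in>paths n. F (c @ [True])) + (\<Sum>c\<in>paths n. F (c @ [False]))"
    by (simp add: sum.reindex inj_on_def)
  finally show ?thesis by (simp add: sum.distrib)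
qed

lemma path_prob_snoc:
  "length c = n \<Longrightarrow> path_prob w (Suc n) (c @ [x]) = path_prob w n c * (if x then w c else 1 - w c)"
  unfolding path_prob_def by (auto simp: nth_append intro!: prod.cong)

lemma sum_path_prob_take:
  "m \<le> n \<Longrightarrow> (\<Sum>c\<in>paths n. path_prob w n c * h (take m c)) = (\<Sum>c\<in>paths m. path_prob w m c * h c)"
proof (induction n)
  case (Suc n)
  show ?case
  proof (cases "m = Suc n")
    case False
    then have "m \<le> n" using Suc.prems by simp
    have "(\<Sum>c\<in>paths (Suc n). path_prob w (Suc n) c * h (take m c))
        = (\<Sum>c\<in>paths n. path_prob w n c * h (take m c))"
      unfolding sum_paths_Suc using \<open>m \<le> n\<close>
      by (intro sum.cong) (auto simp: path_prob_snoc algebra_simps)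
    then show ?thesis using Suc.IH[OF \<open>m \<le> n\<close>] by simp
  qed (auto intro: sum.cong)
qed simp

lemma sum_path_prob: "(\<Sum>c\<in>paths n. path_prob w n c) = 1"
  using sum_path_prob_take[of 0 n w "\<lambda>_. 1"] by (simp add: path_prob_def)

lemma path_prob_pos: "(\<And>d. 0 < w d \<and> w d < 1) \<Longrightarrow> 0 < path_prob w n c"
  unfolding path_prob_def by (intro prod_pos) auto

lemma sum_path_prob_nth:
  assumes "t < n"
  shows "(\<Sum>c\<in>paths n. path_prob w n c * G (take t c) (c ! t))
       = (\<Sum>c\<in>paths n. path_prob w n c *
            (w (take t c) * G (take t c) True + (1 - w (take t c)) * G (take t c) False))"
proof -
  have "(\<Sum>c\<in>paths n. path_prob w n c * G (take t c) (c ! t))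
      = (\<Sum>c\<in>paths (Suc t). path_prob w (Suc t) c * G (take t c) (c ! t))"
    using sum_path_prob_take[of "Suc t" n w "\<lambda>d. G (take t d) (d ! t)"] assms by simp
  also have "\<dots> = (\<Sum>c\<in>paths t. path_prob w t c * (w c * G c True + (1 - w c) * G c False))"
    unfolding sum_paths_Suc by (intro sum.cong) (auto simp: path_prob_snoc algebra_simps nth_append)
  also have "\<dots> = (\<Sum>c\<in>paths n. path_prob w n c *
            (w (take t c) * G (take t c) True + (1 - w (take t c)) * G (take t c) False))"
    using sum_path_prob_take[of t n w "\<lambda>d. w d * G d True + (1 - w d) * G d False"] assms
    by simp
  finally show ?thesis .
qed

section \<open>Hellinger distance and KL divergence\<close>

lemma abs_diff_le_sqrt_diff_sq:
  fixes p q \<mu> :: real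
  assumes "0 \<le> p" "0 \<le> q" "0 < \<mu>"
  shows "\<bar>q - p\<bar> \<le> \<mu> / 2 * (sqrt q - sqrt p)\<^sup>2 + (q + p) / \<mu>"
proof -
  define a b where "a = sqrt q" and "b = sqrt p"
  have ab: "0 \<le> a" "0 \<le> b" "q = a\<^sup>2" "p = b\<^sup>2"
    using assms by (auto simp: a_def b_def)
  have "q - p = (a - b) * (a + b)"
    using ab by (simp add: power2_eq_square algebra_simps)
  then have "\<bar>q - p\<bar> = \<bar>a - b\<bar> * (a + b)"
    using ab by (simp add: abs_mult)
  also have "\<dots> \<le> \<mu> / 2 * (a - b)\<^sup>2 + (a + b)\<^sup>2 / (2 * \<mu>)"
  proof -
    have "0 \<le> (\<mu> * \<bar>a - b\<bar> - (a + b))\<^sup>2 / (2 * \<mu>)" using assms by simp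
    also have "\<dots> = \<mu> / 2 * (a - b)\<^sup>2 + (a + b)\<^sup>2 / (2 * \<mu>) - \<bar>a - b\<bar> * (a + b)"
      using assms by (simp add: field_simps power2_eq_square)
    finally show ?thesis by simp
  qed
  also have "(a + b)\<^sup>2 / (2 * \<mu>) \<le> (q + p) / \<mu>"
  proof -
    have "(a + b)\<^sup>2 \<le> 2 * (q + p)"
      using ab sum_squares_ge_zero[of "a - b" 0] by (simp add: power2_eq_square algebra_simps)
    then show ?thesis using assms by (simp add: field_simps)
  qed
  finally show ?thesis by (simp add: a_def b_def)
qed

lemma sum_sqrt_diff_sq_le_kl:
  assumes "finite A" and pos: "\<And>x. x \<in> A \<Longrightarrow> 0 < p x \<and> 0 < q x"
    and sum_p: "(\<Sum>x\<in>A. p x) = 1" and sum_q: "(\<Sum>x\<in>A. q x) = 1"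
  shows "(\<Sum>x\<in>A. (sqrt (q x) - sqrt (p x))\<^sup>2) \<le> (\<Sum>x\<in>A. p x * ln (p x / q x))"
    (is "_ \<le> ?kl")
proof -
  have "A \<noteq> {}" using sum_p by auto
  have "exp (\<Sum>x\<in>A. p x *\<^sub>R (ln (q x / p x) / 2)) \<le> (\<Sum>x\<in>A. p x * exp (ln (q x / p x) / 2))"
    using pos by (intro convex_on_sum[OF \<open>finite A\<close> \<open>A \<noteq> {}\<close> exp_convex sum_p])
      (auto simp: less_imp_le)
  also have "\<dots> = (\<Sum>x\<in>A. sqrt (p x) * sqrt (q x))"
  proof (intro sum.cong refl)
    fix x assume "x \<in> A"
    then have "exp (ln (q x / p x) / 2) = sqrt (q x / p x)"
      using pos[OF \<open>x \<in> A\<close>] by (simp flip: ln_sqrt)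
    then have "p x * exp (ln (q x / p x) / 2) = p x * sqrt (q x / p x)" by simp
    also have "\<dots> = sqrt (p x) * sqrt (q x)"
      using pos[OF \<open>x \<in> A\<close>] by (simp add: real_sqrt_divide field_simps)
    finally show "p x * exp (ln (q x / p x) / 2) = sqrt (p x) * sqrt (q x)" .
  qed
  moreover have "(\<Sum>x\<in>A. p x *\<^sub>R (ln (q x / p x) / 2)) = - ?kl / 2"
  proof -
    have "ln (q x / p x) = - ln (p x / q x)" if "x \<in> A" for x
      using pos[OF that] by (simp add: ln_div)
    then show ?thesis by (simp add: sum_divide_distrib sum_negf)
  qed
  ultimately have bhattacharyya: "exp (- ?kl / 2) \<le> (\<Sum>x\<in>A. sqrt (p x) * sqrt (q x))"
    by simp
  have "(\<Sum>x\<in>A. (sqrt (q x) - sqrt (p x))\<^sup>2) = 2 - 2 * (\<Sum>x\<in>A. sqrt (p x) * sqrt (q x))"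
    using pos by (simp add: power2_diff sum.distrib sum_subtractf sum_distrib_left sum_p sum_q
        less_imp_le algebra_simps)
  also have "\<dots> \<le> ?kl"
    using bhattacharyya exp_ge_add_one_self[of "- ?kl / 2"] by linarith
  finally show ?thesis .
qed

lemma sum_abs_diff_le_kl:
  fixes p q :: "'a \<Rightarrow> real"
  assumes "finite A" "\<And>x. x \<in> A \<Longrightarrow> 0 < p x \<and> 0 < q x"
    and "(\<Sum>x\<in>A. p x) = 1" "(\<Sum>x\<in>A. q x) = 1" "0 < \<mu>"
  shows "(\<Sum>x\<in>A. \<bar>q x - p x\<bar>) \<le> \<mu> / 2 * (\<Sum>x\<in>A. p x * ln (p x / q x)) + 2 / \<mu>"
proof -
  have "(\<Sum>x\<in>A. \<bar>q x - p x\<bar>) \<le> (\<Sum>x\<in>A. \<mu> / 2 * (sqrt (q x) - sqrt (p x))\<^sup>2 + (q x + p x) / \<mu>)"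
    using assms by (intro sum_mono abs_diff_le_sqrt_diff_sq) (auto simp: less_imp_le)
  also have "\<dots> = \<mu> / 2 * (\<Sum>x\<in>A. (sqrt (q x) - sqrt (p x))\<^sup>2) + 2 / \<mu>"
    using assms by (simp add: sum.distrib sum_distrib_left add_divide_distrib flip: sum_divide_distrib)
  also have "\<dots> \<le> \<mu> / 2 * (\<Sum>x\<in>A. p x * ln (p x / q x)) + 2 / \<mu>"
    using assms sum_sqrt_diff_sq_le_kl[of A p q] by simp
  finally show ?thesis .
qed

lemma sum_mult_le_add_abs_diff:
  fixes p q f :: "'a \<Rightarrow> real"
  assumes "\<And>x. x \<in> A \<Longrightarrow> 0 \<le> f x \<and> f x \<le> B"
  shows "(\<Sum>x\<in>A. q x * f x) \<le> (\<Sum>x\<in>A. p x * f x) + B * (\<Sum>x\<in>A. \<bar>q x - p x\<bar>)"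
proof -
  have "(q x - p x) * f x \<le> B * \<bar>q x - p x\<bar>" if "x \<in> A" for x
    using assms[OF that] by (smt (verit) abs_ge_self abs_ge_zero mult.commute mult_mono)
  then have "(\<Sum>x\<in>A. (q x - p x) * f x) \<le> (\<Sum>x\<in>A. B * \<bar>q x - p x\<bar>)"
    by (rule sum_mono)
  then show ?thesis
    by (simp add: sum_subtractf left_diff_distrib sum_distrib_left)
qed

definition kl_bernoulli :: "real \<Rightarrow> real \<Rightarrow> real" where
  "kl_bernoulli a b = a * ln (a / b) + (1 - a) * ln ((1 - a) / (1 - b))"

lemma kl_bernoulli_half_le:
  fixes e :: real
  assumes "0 \<le> e" "e \<le> 1/4"
  shows "kl_bernoulli (1/2) (1/2 + e) \<le> 6 * e\<^sup>2"
proof -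
  have "kl_bernoulli (1/2) (1/2 + e) = - (ln (1 + 2 * e) + ln (1 - 2 * e)) / 2"
  proof -
    have "(1/2) / (1/2 + e) = inverse (1 + 2 * e)" "(1/2) / (1 - (1/2 + e)) = inverse (1 - 2 * e)"
      using assms by (simp_all add: field_simps)
    then show ?thesis using assms by (simp add: kl_bernoulli_def ln_inverse)
  qed
  moreover have "2 * e - (2 * e)\<^sup>2 \<le> ln (1 + 2 * e)"
    using assms by (intro ln_one_plus_pos_lower_bound) auto
  moreover have "- (2 * e) - 2 * (2 * e)\<^sup>2 \<le> ln (1 - 2 * e)"
    using assms by (intro ln_one_minus_pos_lower_bound) auto
  ultimately show ?thesis by (simp add: power2_eq_square)
qed

lemma kl_path_prob_chain_rule:
  assumes v: "\<And>d. 0 < v d \<and> v d < 1" and w: "\<And>d. 0 < w d \<and> w d < 1"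
  shows "(\<Sum>c\<in>paths n. path_prob v n c * ln (path_prob v n c / path_prob w n c))
       = (\<Sum>t<n. \<Sum>c\<in>paths n. path_prob v n c * kl_bernoulli (v (take t c)) (w (take t c)))"
proof -
  define G where "G d x = (if x then ln (v d / w d) else ln ((1 - v d) / (1 - w d)))" for d x
  have nonzero: "v d \<noteq> 0" "v d \<noteq> 1" "w d \<noteq> 0" "w d \<noteq> 1" for d
    using v[of d] w[of d] by auto
  have ln_ratio: "ln (path_prob v n c / path_prob w n c) = (\<Sum>t<n. G (take t c) (c ! t))" for c
  proof -
    have "path_prob v n c / path_prob w n c
        = (\<Prod>t<n. if c ! t then v (take t c) / w (take t c)
                   else (1 - v (take t c)) / (1 - w (take t c)))"
      unfolding path_prob_def by (simp add: nonzero flip: prod_dividef) (intro prod.cong; simp)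
    also have "ln \<dots> = (\<Sum>t<n. G (take t c) (c ! t))"
      using v w by (subst ln_prod) (auto simp: G_def nonzero intro!: sum.cong divide_pos_pos)
    finally show ?thesis .
  qed
  have "(\<Sum>c\<in>paths n. path_prob v n c * ln (path_prob v n c / path_prob w n c))
      = (\<Sum>t<n. \<Sum>c\<in>paths n. path_prob v n c * G (take t c) (c ! t))"
    unfolding ln_ratio by (simp add: sum_distrib_left sum.swap[of _ "paths n"])
  also have "\<dots> = (\<Sum>t<n. \<Sum>c\<in>paths n. path_prob v n c * kl_bernoulli (v (take t c)) (w (take t c)))"
  proof (rule sum.cong[OF refl])
    fix t assume "t \<in> {..<n}"
    then show "(\<Sum>c\<in>paths n. path_prob v n c * G (take t c) (c ! t))
        = (\<Sum>c\<in>paths n. path_prob v n c * kl_bernoulli (v (take t c)) (w (take t c)))"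
      by (simp only: sum_path_prob_nth[of t n v G] lessThan_iff) (simp add: G_def kl_bernoulli_def)
  qed
  finally show ?thesis .
qed

section \<open>Auctions with bounded CTR estimates\<close>

lemma argmax_idx_spec:
  assumes "0 < N"
  shows "argmax_idx N v < N \<and> (\<forall>j<N. v j \<le> v (argmax_idx N v))"
proof -
  have "Max (v ` {..<N}) \<in> v ` {..<N}"
    using assms by (intro Max_in) auto
  then obtain i where "i < N" "v i = Max (v ` {..<N})" by auto
  then have "\<exists>i. i < N \<and> (\<forall>j<N. v j \<le> v i)" by auto
  then show ?thesis unfolding argmax_idx_def by (rule LeastI_ex)
qed

lemma argsmax_idx_spec:
  assumes "2 \<le> N"
  shows "argsmax_idx N v < N \<and> argsmax_idx N v \<noteq> argmax_idx N v \<and>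
         (\<forall>k<N. k \<noteq> argmax_idx N v \<longrightarrow> v k \<le> v (argsmax_idx N v))"
proof -
  define S where "S = {..<N} - {argmax_idx N v}"
  have "(if argmax_idx N v = 0 then 1 else 0) \<in> S"
    using assms by (auto simp: S_def)
  then have "Max (v ` S) \<in> v ` S"
    by (intro Max_in) (auto simp: S_def)
  then obtain i where "i \<in> S" "v i = Max (v ` S)" by auto
  then have "\<exists>i. i < N \<and> i \<noteq> argmax_idx N v \<and> (\<forall>k<N. k \<noteq> argmax_idx N v \<longrightarrow> v k \<le> v i)"
    by (auto simp: S_def)
  then show ?thesis unfolding argsmax_idx_def by (rule LeastI_ex)
qed

lemma smax_mem: "2 \<le> N \<Longrightarrow> \<exists>i<N. smax N v = v i"
  using argsmax_idx_spec unfolding smax_def by blast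

lemma smax_ge:
  assumes "2 \<le> N" "a < N" "a' < N" "a \<noteq> a'" "x \<le> v a" "x \<le> v a'"
  shows "x \<le> smax N v"
  using argsmax_idx_spec[OF assms(1), of v] assms unfolding smax_def
  by (cases "a = argmax_idx N v") fastforce+

lemma est_take: "est \<pi> b c t = est \<pi> b (take t c) t"
proof -
  have "(\<lambda>s. s < t \<and> s < length c \<and> c ! s) = (\<lambda>s. s < t \<and> s < length (take t c) \<and> take t c ! s)"
    by auto
  then show ?thesis unfolding est_def by simp
qed

lemma winner_take: "winner N \<pi> b c t = winner N \<pi> b (take t c) t"
  unfolding winner_def by (subst est_take) simp

lemma click_prob_eq_path_prob:
  "length c = T \<Longrightarrow>
     click_prob N T \<pi> b \<rho> c = path_prob (\<lambda>d. \<rho> (winner N \<pi> b d (length d))) T c"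
  unfolding click_prob_def path_prob_def by (intro prod.cong refl) (simp add: winner_take[of N \<pi> b c])

locale auction_policy =
  fixes N T :: nat and \<pi> :: policy
  assumes two_le_N: "2 \<le> N"
    and estimate_range: "\<And>t bs cs i. i < N \<Longrightarrow> 0 \<le> \<pi> t bs cs i \<and> \<pi> t bs cs i \<le> 1"
begin

lemma winner_less: "winner N \<pi> b c t < N"
  using argmax_idx_spec two_le_N unfolding winner_def by auto

(* The runner-up's score is at most the winner's, so the price per click is at most the winner's bid. *)
lemma payment_range:
  assumes bids: "\<And>i. i < N \<Longrightarrow> 0 \<le> b t i \<and> b t i \<le> 1"
  shows "0 \<le> payment N \<pi> b c t \<and> payment N \<pi> b c t \<le> 1"
proof -
  define v where "v i = b t i * est \<pi> b c t i" for i
  define i j where "i = winner N \<pi> b c t" and "j = runnerup N \<pi> b c t"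
  have est: "0 \<le> est \<pi> b c t k \<and> est \<pi> b c t k \<le> 1" if "k < N" for k
    using estimate_range[OF that] unfolding est_def by blast
  have "i < N" "j < N" "v j \<le> v i"
    using argmax_idx_spec[of N v] argsmax_idx_spec[of N v] two_le_N
    unfolding i_def j_def winner_def runnerup_def v_def by auto
  have pay: "payment N \<pi> b c t = v j / est \<pi> b c t i"
    unfolding payment_def v_def i_def j_def by simp
  have "v j / est \<pi> b c t i \<le> b t i"
  proof (cases "est \<pi> b c t i = 0")
    case False
    then have "v j / est \<pi> b c t i \<le> v i / est \<pi> b c t i"
      using \<open>v j \<le> v i\<close> est[OF \<open>i < N\<close>] by (simp add: divide_right_mono)
    then show ?thesis using False by (simp add: v_def)
  qed (use bids \<open>i < N\<close> in simp)
  moreover have "0 \<le> v j" using est[OF \<open>j < N\<close>] bids[OF \<open>j < N\<close>] by (simp add: v_def)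
  ultimately show ?thesis using pay est[OF \<open>i < N\<close>] bids[OF \<open>i < N\<close>] by auto
qed

lemma click_prob_nonneg:
  "(\<And>i. i < N \<Longrightarrow> 0 \<le> \<rho> i \<and> \<rho> i \<le> 1) \<Longrightarrow> 0 \<le> click_prob N T \<pi> b \<rho> c"
  unfolding click_prob_def using winner_less by (intro prod_nonneg) auto

lemma click_prob_pos:
  "(\<And>i. i < N \<Longrightarrow> 0 < \<rho> i \<and> \<rho> i < 1) \<Longrightarrow> 0 < click_prob N T \<pi> b \<rho> c"
  unfolding click_prob_def using winner_less by (intro prod_pos) auto

lemma sum_click_prob: "(\<Sum>c\<in>paths T. click_prob N T \<pi> b \<rho> c) = 1"
proof -
  have "(\<Sum>c\<in>paths T. click_prob N T \<pi> b \<rho> c)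
      = (\<Sum>c\<in>paths T. path_prob (\<lambda>d. \<rho> (winner N \<pi> b d (length d))) T c)"
    by (intro sum.cong refl) (simp add: click_prob_eq_path_prob)
  then show ?thesis by (simp add: sum_path_prob)
qed

lemma exp_revenue_range:
  assumes bids: "\<And>t i. t < T \<Longrightarrow> i < N \<Longrightarrow> 0 \<le> b t i \<and> b t i \<le> 1"
    and ctr: "\<And>i. i < N \<Longrightarrow> 0 \<le> \<rho> i \<and> \<rho> i \<le> 1"
  shows "0 \<le> exp_revenue N T \<pi> b \<rho>"
    and "exp_revenue N T \<pi> b \<rho>
           \<le> (\<Sum>c\<in>paths T. click_prob N T \<pi> b \<rho> c * (\<Sum>t<T. \<rho> (winner N \<pi> b c t)))"
proof -
  define w where "w = (\<lambda>d. \<rho> (winner N \<pi> b d (length d)))"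
  have P: "click_prob N T \<pi> b \<rho> c = path_prob w T c" if "c \<in> paths T" for c
    using that by (simp add: click_prob_eq_path_prob w_def)
  have pay: "0 \<le> payment N \<pi> b c t \<and> payment N \<pi> b c t \<le> 1" if "t < T" for c t
    using payment_range bids that by blast
  show "0 \<le> exp_revenue N T \<pi> b \<rho>"
    unfolding exp_revenue_def using pay click_prob_nonneg[of \<rho>, OF ctr]
    by (intro sum_nonneg mult_nonneg_nonneg) auto
  have "exp_revenue N T \<pi> b \<rho> \<le> (\<Sum>c\<in>paths T. click_prob N T \<pi> b \<rho> c * (\<Sum>t<T. if c ! t then 1 else 0))"
    unfolding exp_revenue_def
    by (intro sum_mono mult_left_mono click_prob_nonneg[of \<rho>, OF ctr]) (use pay in auto)
  also have "\<dots> = (\<Sum>c\<in>paths T. path_prob w T c * (\<Sum>t<T. if c ! t then 1 else 0))"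
    by (intro sum.cong refl) (simp add: P)
  also have "\<dots> = (\<Sum>t<T. \<Sum>c\<in>paths T. path_prob w T c * (if c ! t then 1 else 0))"
    by (simp add: sum_distrib_left sum.swap[of _ "paths T"])
  also have "\<dots> = (\<Sum>t<T. \<Sum>c\<in>paths T. path_prob w T c * w (take t c))"
  proof (rule sum.cong[OF refl])
    fix t assume "t \<in> {..<T}"
    then show "(\<Sum>c\<in>paths T. path_prob w T c * (if c ! t then 1 else 0))
        = (\<Sum>c\<in>paths T. path_prob w T c * w (take t c))"
      using sum_path_prob_nth[of t T w "\<lambda>_ x. if x then 1 else 0"] by simp
  qed
  also have "\<dots> = (\<Sum>c\<in>paths T. \<Sum>t<T. path_prob w T c * w (take t c))"
    by (rule sum.swap)
  also have "\<dots> = (\<Sum>c\<in>paths T. click_prob N T \<pi> b \<rho> c * (\<Sum>t<T. \<rho> (winner N \<pi> b c t)))"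
  proof (rule sum.cong[OF refl])
    fix c assume c: "c \<in> paths T"
    have "w (take t c) = \<rho> (winner N \<pi> b c t)" if "t < T" for t
      using c that winner_take[of N \<pi> b c t] by (simp add: w_def)
    then show "(\<Sum>t<T. path_prob w T c * w (take t c))
        = click_prob N T \<pi> b \<rho> c * (\<Sum>t<T. \<rho> (winner N \<pi> b c t))"
      by (simp add: P[OF c] sum_distrib_left)
  qed
  finally show "exp_revenue N T \<pi> b \<rho>
           \<le> (\<Sum>c\<in>paths T. click_prob N T \<pi> b \<rho> c * (\<Sum>t<T. \<rho> (winner N \<pi> b c t)))" .
qed

lemma abs_exp_regret_le:
  assumes bids: "\<And>t i. t < T \<Longrightarrow> i < N \<Longrightarrow> 0 \<le> b t i \<and> b t i \<le> 1"
    and ctr: "\<And>i. i < N \<Longrightarrow> 0 \<le> \<rho> i \<and> \<rho> i \<le> 1"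
  shows "\<bar>exp_regret N T \<pi> b \<rho>\<bar> \<le> T"
proof -
  have "0 \<le> b t i * \<rho> i \<and> b t i * \<rho> i \<le> 1" if "t < T" "i < N" for t i
    using bids[OF that] ctr[OF that(2)] by (simp add: mult_le_one)
  then have smax: "0 \<le> smax N (\<lambda>i. b t i * \<rho> i) \<and> smax N (\<lambda>i. b t i * \<rho> i) \<le> 1" if "t < T" for t
    using smax_mem[OF two_le_N, of "\<lambda>i. b t i * \<rho> i"] that by auto
  have "(\<Sum>t<T. smax N (\<lambda>i. b t i * \<rho> i)) \<le> (\<Sum>t<T. 1)"
    using smax by (intro sum_mono) auto
  moreover have "0 \<le> (\<Sum>t<T. smax N (\<lambda>i. b t i * \<rho> i))"
    using smax by (intro sum_nonneg) auto
  moreover have "exp_revenue N T \<pi> b \<rho> \<le> (\<Sum>c\<in>paths T. click_prob N T \<pi> b \<rho> c * (\<Sum>t<T. 1))"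
  proof -
    have "exp_revenue N T \<pi> b \<rho>
        \<le> (\<Sum>c\<in>paths T. click_prob N T \<pi> b \<rho> c * (\<Sum>t<T. \<rho> (winner N \<pi> b c t)))"
      by (rule exp_revenue_range(2)) (use bids ctr in auto)
    also have "\<dots> \<le> (\<Sum>c\<in>paths T. click_prob N T \<pi> b \<rho> c * (\<Sum>t<T. 1))"
      using ctr winner_less
      by (intro sum_mono mult_left_mono click_prob_nonneg[of \<rho>, OF ctr]) auto
    finally show ?thesis .
  qed
  moreover have "0 \<le> exp_revenue N T \<pi> b \<rho>"
    by (rule exp_revenue_range(1)) (use bids ctr in auto)
  moreover have "(\<Sum>c\<in>paths T. click_prob N T \<pi> b \<rho> c * (\<Sum>t<T. 1)) = T"
    by (simp only: sum_click_prob flip: sum_distrib_right) simp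
  moreover have "(\<Sum>t<T. 1 :: real) = T" by simp
  ultimately show ?thesis
    unfolding exp_regret_def by linarith
qed

end

section \<open>Hard instances\<close>

lemma card_adjacent_pairs_le: "card {k. k < N \<and> i \<in> {k, Suc k mod N}} \<le> 2"
proof -
  have "inj_on (\<lambda>k. Suc k mod N) {..<N}"
    by (auto simp: inj_on_def mod_Suc split: if_splits)
  then have "card {k. k < N \<and> Suc k mod N = i} \<le> Suc 0"
    by (subst card_le_Suc0_iff_eq) (auto simp: inj_on_def)
  moreover have "card {k. k < N \<and> i \<in> {k, Suc k mod N}} \<le> card ({i} \<union> {k. k < N \<and> Suc k mod N = i})"
    by (intro card_mono) auto
  moreover have "\<dots> \<le> card {i} + card {k. k < N \<and> Suc k mod N = i}"
    by (rule card_Un_le)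
  ultimately show ?thesis by simp
qed

definition unit_bids :: "nat \<Rightarrow> nat \<Rightarrow> real" where
  "unit_bids t i = 1"

definition hard_ctr :: "nat \<Rightarrow> real \<Rightarrow> nat \<Rightarrow> nat \<Rightarrow> real" where
  "hard_ctr N e k i = 1/2 + (if i \<in> {k, Suc k mod N} then e else 0)"

lemma hard_ctr_range: "0 \<le> e \<Longrightarrow> e \<le> 1/2 \<Longrightarrow> 0 \<le> hard_ctr N e k i \<and> hard_ctr N e k i \<le> 1"
  by (simp add: hard_ctr_def)

context auction_policy
begin

definition hits :: "nat \<Rightarrow> bool list \<Rightarrow> real" where
  "hits k c = (\<Sum>t<T. if winner N \<pi> unit_bids c t \<in> {k, Suc k mod N} then 1 else 0)"

lemma hits_range: "0 \<le> hits k c \<and> hits k c \<le> T"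
proof -
  have "hits k c \<le> (\<Sum>t<T. 1)"
    unfolding hits_def by (intro sum_mono) simp
  then show ?thesis
    unfolding hits_def by (simp add: sum_nonneg)
qed

lemma sum_hits_le: "(\<Sum>k<N. hits k c) \<le> 2 * real T"
proof -
  have "(\<Sum>k<N. hits k c)
      = (\<Sum>t<T. real (card {k. k < N \<and> winner N \<pi> unit_bids c t \<in> {k, Suc k mod N}}))"
    unfolding hits_def by (subst sum.swap) (simp add: sum.If_cases Int_def lessThan_def)
  also have "\<dots> \<le> (\<Sum>t<T. 2)"
    using card_adjacent_pairs_le by (intro sum_mono) (simp add: of_nat_le_iff)
  finally show ?thesis by simp
qed

lemma sum_exp_hits_uniform_le:
  "(\<Sum>k<N. \<Sum>c\<in>paths T. click_prob N T \<pi> unit_bids (\<lambda>_. 1/2) c * hits k c) \<le> 2 * real T"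
proof -
  have "(\<Sum>k<N. \<Sum>c\<in>paths T. click_prob N T \<pi> unit_bids (\<lambda>_. 1/2) c * hits k c)
      = (\<Sum>c\<in>paths T. click_prob N T \<pi> unit_bids (\<lambda>_. 1/2) c * (\<Sum>k<N. hits k c))"
    by (simp add: sum_distrib_left sum.swap[of _ "{..<N}"])
  also have "\<dots> \<le> (\<Sum>c\<in>paths T. click_prob N T \<pi> unit_bids (\<lambda>_. 1/2) c * (2 * real T))"
    using sum_hits_le click_prob_nonneg[of "\<lambda>_. 1/2"] by (intro sum_mono mult_left_mono) auto
  finally show ?thesis
    by (simp add: sum_click_prob flip: sum_distrib_right)
qed

lemma exp_regret_hard_ge:
  assumes "0 \<le> e" "e \<le> 1/2" "k < N"
  shows "e * (T - (\<Sum>c\<in>paths T. click_prob N T \<pi> unit_bids (hard_ctr N e k) c * hits k c))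
         \<le> exp_regret N T \<pi> unit_bids (hard_ctr N e k)"
proof -
  let ?P = "click_prob N T \<pi> unit_bids (hard_ctr N e k)"
  have "k \<noteq> Suc k mod N" "Suc k mod N < N"
    using assms(3) two_le_N by (auto simp: mod_Suc)
  then have "1/2 + e \<le> smax N (\<lambda>i. unit_bids t i * hard_ctr N e k i)" for t
    by (intro smax_ge[OF two_le_N \<open>k < N\<close>]) (auto simp: unit_bids_def hard_ctr_def)
  then have "T * (1/2 + e) \<le> (\<Sum>t<T. smax N (\<lambda>i. unit_bids t i * hard_ctr N e k i))"
    using sum_mono[of "{..<T}" "\<lambda>_. 1/2 + e"] by simp
  moreover have "exp_revenue N T \<pi> unit_bids (hard_ctr N e k) \<le> T/2 + e * (\<Sum>c\<in>paths T. ?P c * hits k c)"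
  proof -
    have "exp_revenue N T \<pi> unit_bids (hard_ctr N e k)
        \<le> (\<Sum>c\<in>paths T. ?P c * (\<Sum>t<T. hard_ctr N e k (winner N \<pi> unit_bids c t)))"
      by (rule exp_revenue_range(2)) (use assms hard_ctr_range in \<open>auto simp: unit_bids_def\<close>)
    also have "\<dots> = (\<Sum>c\<in>paths T. ?P c * (T/2 + e * hits k c))"
    proof -
      have "(\<Sum>t<T. hard_ctr N e k (winner N \<pi> unit_bids c t)) = T/2 + e * hits k c" for c
        unfolding hard_ctr_def hits_def by (simp add: sum.distrib sum.If_cases)
      then show ?thesis by simp
    qed
    also have "\<dots> = (\<Sum>c\<in>paths T. ?P c) * (T/2) + e * (\<Sum>c\<in>paths T. ?P c * hits k c)"
      by (simp add: distrib_left sum.distrib sum_distrib_left sum_distrib_right algebra_simps)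
    finally show ?thesis by (simp add: sum_click_prob)
  qed
  ultimately show ?thesis
    unfolding exp_regret_def by (simp add: algebra_simps)
qed

lemma kl_uniform_hard_ctr:
  fixes e :: real and k :: nat
  assumes "0 \<le> e" "e < 1/2"
  defines "P0 \<equiv> click_prob N T \<pi> unit_bids (\<lambda>_. 1/2)"
    and "Pk \<equiv> click_prob N T \<pi> unit_bids (hard_ctr N e k)"
  shows "(\<Sum>c\<in>paths T. P0 c * ln (P0 c / Pk c))
       = kl_bernoulli (1/2) (1/2 + e) * (\<Sum>c\<in>paths T. P0 c * hits k c)"
proof -
  define v w :: "bool list \<Rightarrow> real"
    where "v = (\<lambda>_. 1/2)" and "w = (\<lambda>d. hard_ctr N e k (winner N \<pi> unit_bids d (length d)))"
  define K where "K = kl_bernoulli (1/2) (1/2 + e)"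
  have v: "0 < v d \<and> v d < 1" and w: "0 < w d \<and> w d < 1" for d
    using assms by (auto simp: v_def w_def hard_ctr_def)
  have P: "P0 c = path_prob v T c" "Pk c = path_prob w T c" if "c \<in> paths T" for c
    using that by (simp_all add: P0_def Pk_def click_prob_eq_path_prob v_def w_def)
  have "kl_bernoulli (v (take t c)) (w (take t c))
      = (if winner N \<pi> unit_bids c t \<in> {k, Suc k mod N} then K else 0)"
    if "c \<in> paths T" "t < T" for c t
    using that winner_take[of N \<pi> unit_bids c t]
    by (simp add: v_def w_def K_def hard_ctr_def kl_bernoulli_def)
  then have "(\<Sum>t<T. \<Sum>c\<in>paths T. path_prob v T c * kl_bernoulli (v (take t c)) (w (take t c)))
      = (\<Sum>t<T. \<Sum>c\<in>paths T. path_prob v T c *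
           (if winner N \<pi> unit_bids c t \<in> {k, Suc k mod N} then K else 0))"
    by (intro sum.cong refl) simp
  also have "\<dots> = (\<Sum>c\<in>paths T. \<Sum>t<T. K * (path_prob v T c *
           (if winner N \<pi> unit_bids c t \<in> {k, Suc k mod N} then 1 else 0)))"
    by (subst sum.swap) (intro sum.cong refl; simp)
  also have "\<dots> = K * (\<Sum>c\<in>paths T. P0 c * hits k c)"
    unfolding hits_def by (simp add: P sum_distrib_left)
  finally show ?thesis
    using kl_path_prob_chain_rule[OF v w] by (simp add: P K_def)
qed

lemma exp_hits_le:
  fixes e \<mu> :: real and k :: nat
  assumes "0 < e" "e \<le> 1/4" "0 < \<mu>"
  defines "P0 \<equiv> click_prob N T \<pi> unit_bids (\<lambda>_. 1/2)"
    and "Pk \<equiv> click_prob N T \<pi> unit_bids (hard_ctr N e k)"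
  shows "(\<Sum>c\<in>paths T. Pk c * hits k c)
       \<le> (1 + 3 * \<mu> * real T * e\<^sup>2) * (\<Sum>c\<in>paths T. P0 c * hits k c) + 2 * real T / \<mu>"
proof -
  define E0 where "E0 = (\<Sum>c\<in>paths T. P0 c * hits k c)"
  have pos: "0 < P0 c \<and> 0 < Pk c" for c
    using assms unfolding P0_def Pk_def by (auto intro!: click_prob_pos simp: hard_ctr_def)
  have "0 \<le> E0"
    unfolding E0_def using pos hits_range by (intro sum_nonneg mult_nonneg_nonneg) (auto intro: less_imp_le)
  have "(\<Sum>c\<in>paths T. Pk c * hits k c) \<le> E0 + T * (\<Sum>c\<in>paths T. \<bar>Pk c - P0 c\<bar>)"
    unfolding E0_def using hits_range by (intro sum_mult_le_add_abs_diff) auto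
  also have "\<dots> \<le> E0 + T * (\<mu> / 2 * (kl_bernoulli (1/2) (1/2 + e) * E0) + 2 / \<mu>)"
    using sum_abs_diff_le_kl[where A = "paths T" and p = P0 and q = Pk, OF finite_paths] pos assms(1-3)
    by (auto simp: P0_def Pk_def E0_def sum_click_prob kl_uniform_hard_ctr intro!: mult_left_mono)
  also have "\<dots> \<le> E0 + T * (\<mu> / 2 * (6 * e\<^sup>2 * E0) + 2 / \<mu>)"
    using kl_bernoulli_half_le[of e] assms \<open>0 \<le> E0\<close>
    by (intro add_left_mono mult_left_mono add_right_mono mult_right_mono) auto
  finally show ?thesis
    by (simp add: E0_def algebra_simps)
qed

lemma sum_exp_regret_hard_ge:
  assumes "3 \<le> N" "N \<le> T"
  defines "e \<equiv> sqrt (real N / real T) / 48"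
  shows "real N * sqrt (real N * real T) / 288 \<le> (\<Sum>k<N. exp_regret N T \<pi> unit_bids (hard_ctr N e k))"
proof -
  define E0 where "E0 k = (\<Sum>c\<in>paths T. click_prob N T \<pi> unit_bids (\<lambda>_. 1/2) c * hits k c)" for k
  define Ek where "Ek k = (\<Sum>c\<in>paths T. click_prob N T \<pi> unit_bids (hard_ctr N e k) c * hits k c)" for k
  have "0 < T" using assms by simp
  have "0 < e" using assms by (simp add: e_def)
  have "e \<le> 1/48"
    using assms by (simp add: e_def)
  have eT: "sqrt (real N * real T) = 48 * e * real T"
    using \<open>0 < T\<close> by (simp add: e_def real_sqrt_divide real_sqrt_mult field_simps)
  have e2: "3 * 48 * real T * e\<^sup>2 = real N / 16"
    using \<open>0 < T\<close> by (simp add: e_def power_divide)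
  have sum_E0: "(\<Sum>k<N. E0 k) \<le> 2 * real T"
    unfolding E0_def by (rule sum_exp_hits_uniform_le)
  have "Ek k \<le> (1 + 3 * 48 * real T * e\<^sup>2) * E0 k + 2 * real T / 48" for k
    unfolding Ek_def E0_def using \<open>0 < e\<close> \<open>e \<le> 1/48\<close> by (intro exp_hits_le) auto
  then have "Ek k \<le> (1 + real N / 16) * E0 k + real T / 24" for k
    unfolding e2 by simp
  then have "(\<Sum>k<N. Ek k) \<le> (\<Sum>k<N. (1 + real N / 16) * E0 k + real T / 24)"
    by (intro sum_mono)
  also have "\<dots> = (1 + real N / 16) * (\<Sum>k<N. E0 k) + real N * real T / 24"
    by (simp add: sum.distrib sum_distrib_left)
  also have "\<dots> \<le> (1 + real N / 16) * (2 * real T) + real N * real T / 24"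
    using sum_E0 by (intro add_right_mono mult_left_mono) auto
  also have "\<dots> \<le> 5 / 6 * (real N * real T)"
    using assms by (simp add: field_simps)
  finally have "real N * real T / 6 \<le> real N * real T - (\<Sum>k<N. Ek k)" by simp
  then have "e * (real N * real T / 6) \<le> e * (real N * real T - (\<Sum>k<N. Ek k))"
    using \<open>0 < e\<close> by (intro mult_left_mono) auto
  also have "\<dots> = (\<Sum>k<N. e * (real T - Ek k))"
    by (simp add: sum_distrib_left sum_subtractf right_diff_distrib mult_ac)
  also have "\<dots> \<le> (\<Sum>k<N. exp_regret N T \<pi> unit_bids (hard_ctr N e k))"
    using \<open>0 < e\<close> \<open>e \<le> 1/48\<close> by (intro sum_mono) (simp add: Ek_def exp_regret_hard_ge)
  finally show ?thesis
    unfolding eT by (simp add: field_simps)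
qed

end

section \<open>Randomized policies\<close>

lemma (in prob_space) ex_integral_ge_of_sum_ge:
  fixes f :: "nat \<Rightarrow> 'a \<Rightarrow> real"
  assumes "0 < n" and "\<And>k. k < n \<Longrightarrow> integrable M (f k)"
    and "\<And>s. s \<in> space M \<Longrightarrow> real n * x \<le> (\<Sum>k<n. f k s)"
  shows "\<exists>k<n. x \<le> (\<integral>s. f k s \<partial>M)"
proof (rule ccontr)
  assume "\<not> (\<exists>k<n. x \<le> (\<integral>s. f k s \<partial>M))"
  then have "(\<Sum>k<n. \<integral>s. f k s \<partial>M) < (\<Sum>k<n. x)"
    using assms(1) by (intro sum_strict_mono) auto
  moreover have "real n * x \<le> (\<integral>s. (\<Sum>k<n. f k s) \<partial>M)"
    using assms by (intro integral_ge_const) auto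
  ultimately show False
    using assms(2) by simp
qed

lemma (in prob_space) ex_hard_instance_integral_regret_ge:
  assumes N: "3 \<le> N" "N \<le> T" and policy: "\<And>s. auction_policy N (A s)"
    and meas: "\<And>b \<rho>. (\<lambda>s. exp_regret N T (A s) b \<rho>) \<in> borel_measurable M"
  defines "e \<equiv> sqrt (real N / real T) / 48"
  shows "\<exists>k<N. sqrt (real N * real T) / 288 \<le> (\<integral>s. exp_regret N T (A s) unit_bids (hard_ctr N e k) \<partial>M)"
proof (rule ex_integral_ge_of_sum_ge)
  show "0 < N" using N by simp
  have "0 \<le> e" "e \<le> 1/48"
    using N by (simp_all add: e_def)
  then have "0 \<le> hard_ctr N e k i \<and> hard_ctr N e k i \<le> 1" for k i
    by (intro hard_ctr_range) auto
  then show "integrable M (\<lambda>s. exp_regret N T (A s) unit_bids (hard_ctr N e k))" for k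
    using auction_policy.abs_exp_regret_le[OF policy] meas
    by (intro integrable_const_bound[where B = T]) (auto simp: unit_bids_def)
  show "real N * (sqrt (real N * real T) / 288)
      \<le> (\<Sum>k<N. exp_regret N T (A s) unit_bids (hard_ctr N e k))" for s
    using auction_policy.sum_exp_regret_hard_ge[OF policy N] by (simp add: e_def)
qed

theorem theorem2:
  shows "\<exists>C>0. \<forall>(N::nat) (T::nat) (M::real measure) (A::real \<Rightarrow> policy).
    3 \<le> N \<and> N \<le> T \<and> prob_space M
    \<and> (\<forall>s t bs cs i. i < N \<longrightarrow> 0 \<le> A s t bs cs i \<and> A s t bs cs i \<le> 1)
    \<and> (\<forall>b \<rho>. (\<lambda>s. exp_regret N T (A s) b \<rho>) \<in> borel_measurable M)
    \<longrightarrow> (\<exists>b \<rho>. (\<forall>t<T. \<forall>i<N. 0 \<le> b t i \<and> b t i \<le> 1)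
              \<and> (\<forall>i<N. 0 \<le> \<rho> i \<and> \<rho> i \<le> 1)
              \<and> (\<integral>s. exp_regret N T (A s) b \<rho> \<partial>M) \<ge> C * sqrt (real N * real T))"
proof (intro exI[of _ "1/288"] conjI allI impI)
  show "(0::real) < 1/288" by simp
  fix N T :: nat and M :: "real measure" and A :: "real \<Rightarrow> policy"
  assume "3 \<le> N \<and> N \<le> T \<and> prob_space M
    \<and> (\<forall>s t bs cs i. i < N \<longrightarrow> 0 \<le> A s t bs cs i \<and> A s t bs cs i \<le> 1)
    \<and> (\<forall>b \<rho>. (\<lambda>s. exp_regret N T (A s) b \<rho>) \<in> borel_measurable M)"
  then have N: "3 \<le> N" "N \<le> T" and M: "prob_space M"
    and policy: "\<And>s. auction_policy N (A s)"
    and meas: "\<And>b \<rho>. (\<lambda>s. exp_regret N T (A s) b \<rho>) \<in> borel_measurable M"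
    by (auto simp: auction_policy_def)
  define e where "e = sqrt (real N / real T) / 48"
  obtain k where k: "sqrt (real N * real T) / 288 \<le> (\<integral>s. exp_regret N T (A s) unit_bids (hard_ctr N e k) \<partial>M)"
    using prob_space.ex_hard_instance_integral_regret_ge[OF M N policy meas] by (auto simp: e_def)
  have "0 \<le> e" "e \<le> 1/48"
    using N by (simp_all add: e_def)
  then show "\<exists>b \<rho>. (\<forall>t<T. \<forall>i<N. 0 \<le> b t i \<and> b t i \<le> 1)
              \<and> (\<forall>i<N. 0 \<le> \<rho> i \<and> \<rho> i \<le> 1)
              \<and> (\<integral>s. exp_regret N T (A s) b \<rho> \<partial>M) \<ge> 1/288 * sqrt (real N * real T)"
    using k hard_ctr_range[of e N k]
    by (intro exI[of _ unit_bids] exI[of _ "hard_ctr N e k"]) (auto simp: unit_bids_def)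
qed

end
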